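(* Let $n\geq3$, let $S_n$ act on $V=\mathbb{C}^n$ by its natural permutation representation, and let $\alpha=\sum_{g\in S_n}\alpha_g$ be an element of $(H^{2,1}\oplus H^{2,0})^{S_n}$. If $g$ is neither the identity nor a $3$-cycle, then $\alpha_g=0$.
   Context: $S_n$ acts by $\sigma e_i=e_{\sigma(i)}$. For $g\in S_n$, let $V^g$ be its fixed space, $(V^g)^\perp$ its orthogonal complement with respect to the standard bilinear form, and $c_g=\operatorname{codim}V^g$. Identify $(V^g)^*$ with the functionals on $V$ vanishing on $(V^g)^\perp$, and $((V^g)^* )^\perp$ with the functionals on $V$ vanishing on $V^g$, so $V^*=(V^g)^*\oplus((V^g)^* )^\perp$. Define $H^{2,d}_g=S^d(V^g)\otimes\bigwedge^{2-c_g}(V^g)^*\otimes\bigwedge^{c_g}((V^g)^* )^\perp\otimes\mathbb{C}g$ (zero if $2-c_g<0$), viewed inside $S^d(V)\otimes\bigwedge^2V^*\otimes\mathbb{C}S_n$ (wedge the two exterior factors), and $H^{2,d}=\bigoplus_{g\in S_n}H^{2,d}_g$. $S_n$ acts diagonally: $h\cdot(f\otimes\omega\otimes g)=(h\cdot f)\otimes(h\cdot\omega)\otimes hgh^{-1}$, with the contragredient action on $V^*$; $(\cdot)^{S_n}$ denotes invariants and $\alpha_g$ the component of $\alpha$ in $H^{2,1}_g\oplus H^{2,0}_g$. *)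

theory Defs
  imports "HOL-Analysis.Analysis" "HOL-Combinatorics.Perm" "HOL-Library.Function_Algebras"
begin

text \<open>
  V = C^n with basis e_i indexed by a finite type 'n (n = CARD('n)).
  A vector v in V is its coordinate function 'n => complex; a functional
  phi in V^* is its coordinate function in the dual basis, phi(v) = sum_i phi_i v_i.
  S_n is the type 'n perm (all permutations of the finite type 'n).
  Action: sigma e_i = e_(sigma i), i.e. (sigma v)_(sigma i) = v_i; the
  contragredient action on V^* is given by the same coordinate formula.
\<close>

type_synonym 'n vec = "'n \<Rightarrow> complex"

definition cscale :: "complex \<Rightarrow> 'n vec \<Rightarrow> 'n vec" where
  "cscale c v = (\<lambda>i. c * v i)"

definition pact :: "'n perm \<Rightarrow> 'n vec \<Rightarrow> 'n vec" where
  "pact g v = (\<lambda>i. v (Perm.apply (inverse g) i))"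

definition pairing :: "'n::finite vec \<Rightarrow> 'n vec \<Rightarrow> complex" where
  "pairing u v = (\<Sum>i\<in>UNIV. u i * v i)"

definition fixsp :: "'n perm \<Rightarrow> 'n vec set" where
  "fixsp g = {v. pact g v = v}"

definition fixsp_perp :: "'n::finite perm \<Rightarrow> 'n vec set" where
  "fixsp_perp g = {w. \<forall>v\<in>fixsp g. pairing w v = 0}"

definition codim_fix :: "'n::finite perm \<Rightarrow> nat" where
  "codim_fix g = CARD('n) - vector_space.dim cscale (fixsp g)"

text \<open>(V^g)^* = functionals vanishing on (V^g)^perp; ((V^g)^*)^perp = functionals vanishing on V^g.\<close>
definition dual_fix :: "'n::finite perm \<Rightarrow> 'n vec set" where
  "dual_fix g = {phi. \<forall>w\<in>fixsp_perp g. pairing phi w = 0}"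

definition dual_fix_perp :: "'n::finite perm \<Rightarrow> 'n vec set" where
  "dual_fix_perp g = {phi. \<forall>v\<in>fixsp g. pairing phi v = 0}"

text \<open>2-forms on V: coefficient functions omega(j,k) = omega(e_j,e_k).
  Wedge of two 1-forms.\<close>
type_synonym 'n form2 = "'n \<Rightarrow> 'n \<Rightarrow> complex"

definition wedge :: "'n vec \<Rightarrow> 'n vec \<Rightarrow> 'n form2" where
  "wedge phi psi = (\<lambda>j k. phi j * psi k - phi k * psi j)"

text \<open>Tensors in S^1(V) (x) Lambda^2 V^*: coefficients a(i,j,k);
  tensors in S^0(V) (x) Lambda^2 V^* = Lambda^2 V^*: coefficients b(j,k).\<close>
type_synonym 'n tens1 = "'n \<Rightarrow> 'n \<Rightarrow> 'n \<Rightarrow> complex"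

definition scale1 :: "complex \<Rightarrow> 'n tens1 \<Rightarrow> 'n tens1" where
  "scale1 c a = (\<lambda>i j k. c * a i j k)"

definition scale0 :: "complex \<Rightarrow> 'n form2 \<Rightarrow> 'n form2" where
  "scale0 c b = (\<lambda>j k. c * b j k)"

text \<open>The set of 2-forms  omega1 /\ omega2  with omega1 in Lambda^(2-c)(V^g)^*,
  omega2 in Lambda^c((V^g)^*)^perp, written out for c = 0,1,2 (Lambda^0 = C,
  Lambda^1 U = U, Lambda^2 U spanned by u /\ u'); empty (space zero) for c > 2.
  H^{2,d}_g is the span of the products f (x) omega1 /\ omega2.\<close>
definition wedge_gens :: "'n::finite perm \<Rightarrow> 'n form2 set" where
  "wedge_gens g =
    (if codim_fix g = 0 then {wedge phi psi | phi psi. phi \<in> dual_fix g \<and> psi \<in> dual_fix g}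
     else if codim_fix g = 1 then {wedge phi psi | phi psi. phi \<in> dual_fix g \<and> psi \<in> dual_fix_perp g}
     else if codim_fix g = 2 then {wedge phi psi | phi psi. phi \<in> dual_fix_perp g \<and> psi \<in> dual_fix_perp g}
     else {})"

text \<open>H^{2,1}_g: span of f (x) omega with f in S^1(V^g) = V^g.\<close>
definition H21 :: "'n::finite perm \<Rightarrow> 'n tens1 set" where
  "H21 g = module.span scale1
     {(\<lambda>i j k. f i * w j k) | f w. f \<in> fixsp g \<and> w \<in> module.span scale0 (wedge_gens g)}"

text \<open>H^{2,0}_g: S^0(V^g) = C, so span of the forms omega.\<close>
definition H20 :: "'n::finite perm \<Rightarrow> 'n form2 set" where
  "H20 g = module.span scale0 (wedge_gens g)"

text \<open>Diagonal S_n action on S^d(V) (x) Lambda^2 V^* (x) C S_n, in coordinates: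
  an element is a function from the basis g of C S_n to tensor coefficients;
  h.(f (x) omega (x) g) = (h f) (x) (h omega) (x) h g h^-1.\<close>
definition act1 :: "'n perm \<Rightarrow> ('n perm \<Rightarrow> 'n tens1) \<Rightarrow> ('n perm \<Rightarrow> 'n tens1)" where
  "act1 h a = (\<lambda>g i j k. a (inverse h * g * h)
      (Perm.apply (inverse h) i) (Perm.apply (inverse h) j) (Perm.apply (inverse h) k))"

definition act0 :: "'n perm \<Rightarrow> ('n perm \<Rightarrow> 'n form2) \<Rightarrow> ('n perm \<Rightarrow> 'n form2)" where
  "act0 h b = (\<lambda>g j k. b (inverse h * g * h)
      (Perm.apply (inverse h) j) (Perm.apply (inverse h) k))"

definition is_3cycle :: "'n perm \<Rightarrow> bool" where
  "is_3cycle g \<longleftrightarrow> (\<exists>a b c. distinct [a, b, c] \<and> g = cycle [a, b, c])"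

end

theory Submission imports Defs begin

text \<open>
  Invariance of alpha makes its component at g invariant under the centralizer of g.
  If some k in the centralizer fixes the fixed space V^g pointwise but negates every
  generator of the exterior factor Lambda^(2-c)(V^g)^* /\ Lambda^c((V^g)^*)^perp,
  then that component equals its own negative and vanishes. For a transposition
  (a b) take k = (a b): ((V^g)^*)^perp is the line through e_a^* - e_b^*, which k
  negates, while (V^g)^* is fixed by k. For a double transposition (a b)(c d) take
  k = (a b), which negates e_a^* - e_b^* and fixes e_c^* - e_d^*, hence negates their
  wedge. Every other permutation except the identity and the 3-cycles has
  codim V^g >= 3, because a g-invariant vector is constant on g-orbits; then the
  exterior factor is zero.
\<close>

unbundle permutation_syntax

declare apply_inj [simp]

section \<open>Coordinates on V\<close>

definition unit_vec :: "'n \<Rightarrow> 'n vec" where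
  "unit_vec x = (\<lambda>i. of_bool (i = x))"

lemma pairing_unit_vec [simp]:
  "pairing (unit_vec x) v = v x" "pairing v (unit_vec x) = v x"
  by (simp_all add: pairing_def unit_vec_def)

lemma pairing_add_right: "pairing u (v + w) = pairing u v + pairing u w"
  by (simp add: pairing_def distrib_left sum.distrib)

lemma pairing_diff_left: "pairing (v - w) u = pairing v u - pairing w u"
  by (simp add: pairing_def left_diff_distrib sum_subtractf)

lemma pairing_diff_right: "pairing u (v - w) = pairing u v - pairing u w"
  by (simp add: pairing_def right_diff_distrib sum_subtractf)

interpretation cvec: vector_space cscale
  by unfold_locales (auto simp: cscale_def fun_eq_iff algebra_simps)

interpretation form2: module scale0
  by unfold_locales (auto simp: scale0_def fun_eq_iff algebra_simps)

interpretation tens1: module scale1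
  by unfold_locales (auto simp: scale1_def fun_eq_iff algebra_simps)

lemma sum_cscale_apply:
  "finite S \<Longrightarrow> (\<Sum>v\<in>S. cscale (u v) (f v)) i = (\<Sum>v\<in>S. u v * f v i)"
  by (induction S rule: finite_induct) (auto simp: cscale_def)

lemma inj_unit_vec: "inj unit_vec"
proof (rule injI)
  fix x y
  assume "unit_vec x = unit_vec y"
  then have "unit_vec x x = unit_vec y x" by simp
  then show "x = y" by (simp add: unit_vec_def)
qed

lemma span_unit_vec: "cvec.span (range unit_vec) = (UNIV :: 'n::finite vec set)"
proof -
  have "v \<in> cvec.span (range unit_vec)" for v :: "'n vec"
  proof -
    have "v = (\<Sum>x\<in>UNIV. cscale (v x) (unit_vec x))"
      by (simp add: fun_eq_iff sum_cscale_apply unit_vec_def)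
    also have "\<dots> \<in> cvec.span (range unit_vec)"
      by (intro cvec.span_sum cvec.span_scale cvec.span_base) auto
    finally show ?thesis .
  qed
  then show ?thesis by auto
qed

lemma independent_unit_vec: "cvec.independent (unit_vec ` (X :: 'n::finite set))"
proof
  assume "cvec.dependent (unit_vec ` X)"
  then obtain u v where v: "v \<in> unit_vec ` X" "u v \<noteq> 0"
    and sum0: "(\<Sum>w\<in>unit_vec ` X. cscale (u w) w) = 0"
    using cvec.dependent_finite[of "unit_vec ` X"] by auto
  obtain x where x: "v = unit_vec x" "x \<in> X" using v by auto
  have "0 = (\<Sum>y\<in>X. u (unit_vec y) * unit_vec y x)"
    using fun_cong[OF sum0, of x]
    by (simp add: sum_cscale_apply sum.reindex inj_on_subset[OF inj_unit_vec])
  also have "\<dots> = (\<Sum>y\<in>{x}. u (unit_vec y))"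
    using x by (simp add: unit_vec_def)
  finally show False using v x by simp
qed

interpretation cvec: finite_dimensional_vector_space cscale "range (unit_vec :: 'n::finite \<Rightarrow> _)"
  by unfold_locales (auto simp: span_unit_vec independent_unit_vec)

lemma dim_UNIV_vec: "cvec.dim (UNIV :: 'n::finite vec set) = CARD('n)"
  using cvec.dim_UNIV card_image[OF inj_unit_vec] by simp

lemma dim_add_card_le_CARD:
  fixes W :: "'n::finite vec set"
  assumes W: "cvec.subspace W" and trivial: "\<forall>v\<in>W. (\<forall>i. i \<notin> X \<longrightarrow> v i = 0) \<longrightarrow> v = 0"
  shows "cvec.dim W + card X \<le> CARD('n)"
proof -
  define U where "U = {v :: 'n vec. \<forall>i. i \<notin> X \<longrightarrow> v i = 0}"
  have U: "cvec.subspace U"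
    unfolding U_def by (rule cvec.subspaceI) (auto simp: cscale_def)
  have "card X = card (unit_vec ` X)"
    by (metis card_image inj_on_subset inj_unit_vec subset_UNIV)
  also have "\<dots> \<le> cvec.dim U"
    by (rule cvec.independent_card_le_dim[OF _ independent_unit_vec]) (auto simp: U_def unit_vec_def)
  finally have "card X \<le> cvec.dim U" .
  moreover have "cvec.dim (W \<inter> U) = 0"
    using trivial by (auto simp: U_def)
  moreover have "cvec.dim {x + y |x y. x \<in> W \<and> y \<in> U} \<le> CARD('n)"
    using cvec.dim_subset[of "{x + y |x y. x \<in> W \<and> y \<in> U}" UNIV] dim_UNIV_vec[where 'n='n]
    by simp
  ultimately show ?thesis using cvec.dim_sums_Int[OF W U] by linarith
qed

section \<open>Fixed spaces and their codimension\<close>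

lemma apply_inverse_apply [simp]: "inverse g \<langle>$\<rangle> (g \<langle>$\<rangle> i) = i"
  by (simp add: apply_sequence)

lemma apply_apply_inverse [simp]: "g \<langle>$\<rangle> (inverse g \<langle>$\<rangle> i) = i"
  by (simp add: apply_sequence)

lemma mem_fixsp_iff: "v \<in> fixsp g \<longleftrightarrow> (\<forall>i. v (g \<langle>$\<rangle> i) = v i)"
proof -
  have "pact g v = v \<longleftrightarrow> (\<forall>i. v (inverse g \<langle>$\<rangle> i) = v i)"
    by (simp add: pact_def fun_eq_iff)
  also have "\<dots> \<longleftrightarrow> (\<forall>i. v (g \<langle>$\<rangle> i) = v i)"
    by (metis apply_inverse_apply apply_apply_inverse)
  finally show ?thesis by (simp add: fixsp_def)
qed

lemma subspace_fixsp: "cvec.subspace (fixsp g)"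
  by (rule cvec.subspaceI) (auto simp: mem_fixsp_iff cscale_def)

lemma apply_in_orbit: "y \<in> orbit g x \<Longrightarrow> g \<langle>$\<rangle> y \<in> orbit g x"
  using apply_self_in_orbit orbit_equiv by metis

lemma fixsp_const_on_orbit:
  assumes "v \<in> fixsp g" and "y \<in> orbit g x"
  shows "v y = v x"
proof -
  from assms(2) obtain n where "y = (g ^ n) \<langle>$\<rangle> x" by (rule in_orbitE)
  moreover have "v ((g ^ n) \<langle>$\<rangle> x) = v x" for n
    by (induction n) (use assms(1) in \<open>simp_all add: mem_fixsp_iff apply_times\<close>)
  ultimately show ?thesis by simp
qed

lemma fixsp_subset_fixsp_swap:
  assumes "g \<langle>$\<rangle> a = b"
  shows "fixsp g \<subseteq> fixsp \<langle>a \<leftrightarrow> b\<rangle>"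
proof
  fix v
  assume "v \<in> fixsp g"
  then have "v b = v a"
    using assms by (metis mem_fixsp_iff)
  then show "v \<in> fixsp \<langle>a \<leftrightarrow> b\<rangle>"
    unfolding mem_fixsp_iff by (metis apply_swap_eq_iff apply_swap_same apply_swap_simp)
qed

lemma card_le_codim_fix:
  fixes g :: "'n::finite perm"
  assumes "\<forall>x\<in>X. \<not> orbit g x \<subseteq> X"
  shows "card X \<le> codim_fix g"
proof -
  have "v = 0" if v: "v \<in> fixsp g" "\<forall>i. i \<notin> X \<longrightarrow> v i = 0" for v
  proof (rule ext)
    fix x
    show "v x = 0 x"
    proof (cases "x \<in> X")
      case True
      then obtain y where "y \<in> orbit g x" "y \<notin> X" using assms by auto
      then show ?thesis using v fixsp_const_on_orbit[OF v(1)] by fastforce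
    qed (use v in simp)
  qed
  then show ?thesis
    using dim_add_card_le_CARD[OF subspace_fixsp, of g X] by (simp add: codim_fix_def)
qed

lemma codim_fix_pos: "g \<noteq> 1 \<Longrightarrow> 0 < codim_fix (g :: 'n::finite perm)"
proof -
  assume "g \<noteq> 1"
  then obtain a where "g \<langle>$\<rangle> a \<noteq> a" by (auto simp: perm_eq_iff)
  moreover have "g \<langle>$\<rangle> a \<in> orbit g a" by simp
  ultimately have "card {a} \<le> codim_fix g"
    by (intro card_le_codim_fix) blast
  then show ?thesis by simp
qed

lemma three_le_codim_fix:
  fixes g :: "'n::finite perm"
  assumes "distinct [a, b, c]"
    and "a' \<in> orbit g a" "b' \<in> orbit g b" "c' \<in> orbit g c"
    and "a' \<notin> {a, b, c}" "b' \<notin> {a, b, c}" "c' \<notin> {a, b, c}"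
  shows "3 \<le> codim_fix g"
proof -
  have "card {a, b, c} \<le> codim_fix g"
    by (rule card_le_codim_fix) (use assms in blast)
  with assms(1) show ?thesis by simp
qed

lemma two_le_codim_fix_double_transposition:
  assumes "distinct [a, b, c, d]"
  shows "2 \<le> codim_fix (\<langle>a \<leftrightarrow> b\<rangle> * \<langle>c \<leftrightarrow> d\<rangle> :: 'n::finite perm)"
proof -
  let ?g = "\<langle>a \<leftrightarrow> b\<rangle> * \<langle>c \<leftrightarrow> d\<rangle> :: 'n perm"
  have "?g \<langle>$\<rangle> a \<in> orbit ?g a" "?g \<langle>$\<rangle> c \<in> orbit ?g c"
    by simp_all
  moreover have "?g \<langle>$\<rangle> a = b" "?g \<langle>$\<rangle> c = d"
    using assms by (auto simp: apply_times)
  ultimately have "card {a, c} \<le> codim_fix ?g"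
    using assms by (intro card_le_codim_fix) auto
  with assms show ?thesis by simp
qed

lemma orbit_involution:
  assumes "\<forall>x. g \<langle>$\<rangle> (g \<langle>$\<rangle> x) = x"
  shows "orbit g a = {a, g \<langle>$\<rangle> a}"
proof
  have "(g ^ n) \<langle>$\<rangle> a \<in> {a, g \<langle>$\<rangle> a}" for n
    by (induction n) (use assms in \<open>auto simp: apply_times\<close>)
  then show "orbit g a \<subseteq> {a, g \<langle>$\<rangle> a}" by (auto elim: in_orbitE)
qed simp

lemma moved_point_outside:
  assumes "g \<noteq> p" and "\<forall>x\<in>A. g \<langle>$\<rangle> x = p \<langle>$\<rangle> x" and "\<forall>x. x \<notin> A \<longrightarrow> p \<langle>$\<rangle> x = x"
  obtains e where "e \<notin> A" and "g \<langle>$\<rangle> e \<noteq> e"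
  using assms by (metis perm_eqI)

lemma three_le_codim_fix_of_long_orbit:
  fixes g :: "'n::finite perm"
  assumes moved: "g \<langle>$\<rangle> a \<noteq> a" and long: "g \<langle>$\<rangle> (g \<langle>$\<rangle> a) \<noteq> a"
    and not_3cycle: "\<not> is_3cycle g"
  shows "3 \<le> codim_fix g"
proof -
  define b c d where "b = g \<langle>$\<rangle> a" and "c = g \<langle>$\<rangle> b" and "d = g \<langle>$\<rangle> c"
  have abc: "distinct [a, b, c]"
    using moved long by (auto simp: b_def c_def)
  have orbits: "c \<in> orbit g a" "c \<in> orbit g b" "d \<in> orbit g a" "d \<in> orbit g b" "d \<in> orbit g c"
    by (simp_all add: b_def c_def d_def apply_in_orbit)
  show ?thesis
  proof (cases "d = a")
    case False
    then have "d \<notin> {a, b, c}"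
      using abc by (auto simp: d_def c_def b_def)
    then show ?thesis
      using three_le_codim_fix[OF abc] orbits by blast
  next
    case True
    have "is_3cycle (cycle [a, b, c])"
      using abc unfolding is_3cycle_def by blast
    with not_3cycle have "g \<noteq> cycle [a, b, c]"
      by blast
    then obtain e where e: "e \<notin> {a, b, c}" "g \<langle>$\<rangle> e \<noteq> e"
      by (rule moved_point_outside[where A = "{a, b, c}"])
        (use abc True in \<open>auto simp: apply_times b_def c_def d_def\<close>)
    define f where "f = g \<langle>$\<rangle> e"
    have "f \<notin> {a, b, e}"
      using e True abc by (auto simp: f_def b_def c_def d_def)
    moreover have "c \<notin> {a, b, e}" and "distinct [a, b, e]"
      using abc e by auto
    ultimately show ?thesis
      using three_le_codim_fix[of a b e c g c f] orbits by (simp add: f_def)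
  qed
qed

lemma three_le_codim_fix_of_three_orbits:
  fixes g :: "'n::finite perm"
  assumes "g \<langle>$\<rangle> a \<noteq> a" "g \<langle>$\<rangle> b \<noteq> b" "g \<langle>$\<rangle> c \<noteq> c"
    and "b \<notin> orbit g a" "c \<notin> orbit g a" "c \<notin> orbit g b"
  shows "3 \<le> codim_fix g"
proof -
  have "a \<notin> orbit g b" "a \<notin> orbit g c" "b \<notin> orbit g c"
    using assms(4-6) orbit_equiv in_orbit_self by metis+
  then show ?thesis
    using assms
    by (intro three_le_codim_fix[of a b c "g \<langle>$\<rangle> a" g "g \<langle>$\<rangle> b" "g \<langle>$\<rangle> c"])
      (auto intro: apply_in_orbit)
qed

lemma involution_classification:
  fixes g :: "'n::finite perm"
  assumes involution: "\<forall>x. g \<langle>$\<rangle> (g \<langle>$\<rangle> x) = x" and "g \<noteq> 1"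
  obtains a b where "a \<noteq> b" "g = \<langle>a \<leftrightarrow> b\<rangle>"
    | a b c d where "distinct [a, b, c, d]" "g = \<langle>a \<leftrightarrow> b\<rangle> * \<langle>c \<leftrightarrow> d\<rangle>"
    | "3 \<le> codim_fix g"
proof -
  note orbits = orbit_involution[OF involution]
  obtain a where a: "g \<langle>$\<rangle> a \<noteq> a"
    using assms(2) by (auto simp: perm_eq_iff)
  define b where "b = g \<langle>$\<rangle> a"
  have ab: "a \<noteq> b" "g \<langle>$\<rangle> b = a"
    using a involution by (simp_all add: b_def)
  show ?thesis
  proof (cases "g = \<langle>a \<leftrightarrow> b\<rangle>")
    case True
    with ab(1) show ?thesis by (rule that(1))
  next
    case False
    obtain c where c: "c \<notin> {a, b}" "g \<langle>$\<rangle> c \<noteq> c"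
      by (rule moved_point_outside[OF False, where A = "{a, b}"]) (use ab in \<open>auto simp: b_def\<close>)
    define d where "d = g \<langle>$\<rangle> c"
    have abcd: "distinct [a, b, c, d]" and cd: "g \<langle>$\<rangle> d = c"
      using ab c involution by (auto simp: b_def d_def)
    show ?thesis
    proof (cases "g = \<langle>a \<leftrightarrow> b\<rangle> * \<langle>c \<leftrightarrow> d\<rangle>")
      case True
      with abcd show ?thesis by (rule that(2))
    next
      case False
      obtain e where "e \<notin> {a, b, c, d}" "g \<langle>$\<rangle> e \<noteq> e"
        by (rule moved_point_outside[OF False, where A = "{a, b, c, d}"])
          (use ab cd abcd in \<open>auto simp: apply_times b_def d_def\<close>)
      with a c abcd have "3 \<le> codim_fix g"
        by (intro three_le_codim_fix_of_three_orbits[of g a c e]) (auto simp: orbits b_def d_def)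
      then show ?thesis by (rule that(3))
    qed
  qed
qed

lemma transposition_or_double_transposition_or_three_le_codim_fix:
  fixes g :: "'n::finite perm"
  assumes "g \<noteq> 1" and "\<not> is_3cycle g"
  obtains a b where "a \<noteq> b" "g = \<langle>a \<leftrightarrow> b\<rangle>"
    | a b c d where "distinct [a, b, c, d]" "g = \<langle>a \<leftrightarrow> b\<rangle> * \<langle>c \<leftrightarrow> d\<rangle>"
    | "3 \<le> codim_fix g"
proof (cases "\<forall>x. g \<langle>$\<rangle> (g \<langle>$\<rangle> x) = x")
  case True
  then show ?thesis
    using involution_classification assms(1) that by blast
next
  case False
  then obtain a where "g \<langle>$\<rangle> (g \<langle>$\<rangle> a) \<noteq> a" by blast
  moreover from this have "g \<langle>$\<rangle> a \<noteq> a" by auto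
  ultimately show ?thesis
    using that(3) three_le_codim_fix_of_long_orbit assms(2) by blast
qed

section \<open>The dual spaces of transpositions\<close>

definition unit_diff :: "'n \<Rightarrow> 'n \<Rightarrow> 'n vec" where
  "unit_diff a b = unit_vec a - unit_vec b"

lemma unit_diff_swap: "unit_diff a b (\<langle>a \<leftrightarrow> b\<rangle> \<langle>$\<rangle> x) = - unit_diff a b x"
  by (cases "x = a"; cases "x = b") (auto simp: unit_diff_def unit_vec_def)

lemma unit_diff_swap_disjoint:
  "{a, b} \<inter> {c, d} = {} \<Longrightarrow> unit_diff c d (\<langle>a \<leftrightarrow> b\<rangle> \<langle>$\<rangle> x) = unit_diff c d x"
  by (cases "x = a"; cases "x = b") (auto simp: unit_diff_def unit_vec_def)

lemma dual_fix_apply: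
  assumes "phi \<in> dual_fix g"
  shows "phi (g \<langle>$\<rangle> i) = phi i"
proof -
  have "unit_diff (g \<langle>$\<rangle> i) i \<in> fixsp_perp g"
    by (auto simp: fixsp_perp_def unit_diff_def pairing_diff_left mem_fixsp_iff)
  then have "pairing phi (unit_diff (g \<langle>$\<rangle> i) i) = 0"
    using assms by (simp add: dual_fix_def)
  then show ?thesis by (simp add: unit_diff_def pairing_diff_right)
qed

lemma dual_fix_perp_fixed_point:
  assumes "psi \<in> dual_fix_perp g" and "g \<langle>$\<rangle> i = i"
  shows "psi i = 0"
proof -
  have "g \<langle>$\<rangle> j = i \<longleftrightarrow> j = i" for j
    using assms(2) by (metis apply_inj)
  then have "unit_vec i \<in> fixsp g"
    by (simp add: mem_fixsp_iff unit_vec_def)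
  with assms(1) have "pairing psi (unit_vec i) = 0"
    unfolding dual_fix_perp_def by blast
  then show ?thesis by simp
qed

lemma dual_fix_perp_swapped_pair:
  assumes "psi \<in> dual_fix_perp g" and "g \<langle>$\<rangle> a = b" "g \<langle>$\<rangle> b = a"
  shows "psi b = - psi a"
proof -
  have "g \<langle>$\<rangle> j = a \<longleftrightarrow> j = b" "g \<langle>$\<rangle> j = b \<longleftrightarrow> j = a" for j
    using assms(2,3) by (metis apply_inj)+
  then have "unit_vec a + unit_vec b \<in> fixsp g"
    by (simp add: mem_fixsp_iff unit_vec_def)
  with assms(1) have "pairing psi (unit_vec a + unit_vec b) = 0"
    by (simp add: dual_fix_perp_def)
  then show ?thesis by (simp add: pairing_add_right eq_neg_iff_add_eq_0 add.commute)
qed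

lemma dual_fix_perp_transposition:
  assumes "a \<noteq> b" and psi: "psi \<in> dual_fix_perp \<langle>a \<leftrightarrow> b\<rangle>"
  obtains p where "psi = (\<lambda>x. p * unit_diff a b x)"
proof
  show "psi = (\<lambda>x. psi a * unit_diff a b x)"
  proof
    fix x
    consider "x = a" | "x = b" | "x \<notin> {a, b}" by blast
    then show "psi x = psi a * unit_diff a b x"
    proof cases
      case 2
      then show ?thesis
        using dual_fix_perp_swapped_pair[OF psi, of a b] assms(1) by (simp add: unit_diff_def unit_vec_def)
    next
      case 3
      then show ?thesis
        using dual_fix_perp_fixed_point[OF psi, of x] by (simp add: unit_diff_def unit_vec_def)
    qed (use assms(1) in \<open>simp add: unit_diff_def unit_vec_def\<close>)
  qed
qed

lemma dual_fix_perp_double_transposition: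
  assumes abcd: "distinct [a, b, c, d]"
    and psi: "psi \<in> dual_fix_perp (\<langle>a \<leftrightarrow> b\<rangle> * \<langle>c \<leftrightarrow> d\<rangle>)"
  obtains p q where "psi = (\<lambda>x. p * unit_diff a b x + q * unit_diff c d x)"
proof
  let ?g = "\<langle>a \<leftrightarrow> b\<rangle> * \<langle>c \<leftrightarrow> d\<rangle>"
  have "?g \<langle>$\<rangle> a = b" "?g \<langle>$\<rangle> b = a" "?g \<langle>$\<rangle> c = d" "?g \<langle>$\<rangle> d = c"
    "\<And>x. x \<notin> {a, b, c, d} \<Longrightarrow> ?g \<langle>$\<rangle> x = x"
    using abcd by (auto simp: apply_times)
  then have "psi b = - psi a" "psi d = - psi c" "\<And>x. x \<notin> {a, b, c, d} \<Longrightarrow> psi x = 0"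
    using dual_fix_perp_swapped_pair[OF psi] dual_fix_perp_fixed_point[OF psi] by blast+
  then show "psi = (\<lambda>x. psi a * unit_diff a b x + psi c * unit_diff c d x)"
    using abcd by (auto simp: unit_diff_def unit_vec_def fun_eq_iff)
qed

section \<open>Anti-invariance\<close>

definition anti_invariant_form :: "'n perm \<Rightarrow> 'n form2 \<Rightarrow> bool" where
  "anti_invariant_form k b \<longleftrightarrow> (\<forall>j l. b (k \<langle>$\<rangle> j) (k \<langle>$\<rangle> l) = - b j l)"

definition anti_invariant_tens :: "'n perm \<Rightarrow> 'n tens1 \<Rightarrow> bool" where
  "anti_invariant_tens k a \<longleftrightarrow> (\<forall>i j l. a (k \<langle>$\<rangle> i) (k \<langle>$\<rangle> j) (k \<langle>$\<rangle> l) = - a i j l)"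

lemma anti_invariant_wedge:
  assumes "\<forall>i. phi (k \<langle>$\<rangle> i) = phi i" and "\<forall>i. psi (k \<langle>$\<rangle> i) = - psi i"
  shows "anti_invariant_form k (wedge phi psi)"
  using assms by (simp add: anti_invariant_form_def wedge_def)

lemma anti_invariant_H20:
  assumes "\<forall>w\<in>wedge_gens g. anti_invariant_form k w" and "b \<in> H20 g"
  shows "anti_invariant_form k b"
proof -
  have "form2.subspace (Collect (anti_invariant_form k))"
    by (rule form2.subspaceI) (auto simp: anti_invariant_form_def scale0_def)
  with assms(2) show ?thesis
    unfolding H20_def by (rule form2.span_induct) (use assms(1) in blast)
qed

lemma anti_invariant_H21:
  assumes "fixsp g \<subseteq> fixsp k" and "\<forall>w\<in>wedge_gens g. anti_invariant_form k w" and "a \<in> H21 g"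
  shows "anti_invariant_tens k a"
proof -
  have "tens1.subspace (Collect (anti_invariant_tens k))"
    by (rule tens1.subspaceI) (auto simp: anti_invariant_tens_def scale1_def)
  moreover have "anti_invariant_tens k (\<lambda>i j l. f i * w j l)"
    if "f \<in> fixsp g" and "w \<in> H20 g" for f w
  proof -
    have "f \<in> fixsp k"
      using that(1) assms(1) by blast
    moreover have "anti_invariant_form k w"
      using anti_invariant_H20[OF assms(2) that(2)] .
    ultimately show ?thesis
      by (simp add: anti_invariant_tens_def anti_invariant_form_def mem_fixsp_iff)
  qed
  ultimately show ?thesis
    using assms(3) unfolding H21_def H20_def[symmetric] by (auto elim: tens1.span_induct)
qed

lemma anti_invariant_wedge_gens_transposition:
  assumes "a \<noteq> b" and "w \<in> wedge_gens \<langle>a \<leftrightarrow> b\<rangle>"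
  shows "anti_invariant_form \<langle>a \<leftrightarrow> b\<rangle> w"
proof -
  let ?g = "\<langle>a \<leftrightarrow> b\<rangle>"
  note perp = dual_fix_perp_transposition[OF assms(1)]
  have "?g \<noteq> 1"
    using assms(1) by (metis apply_one apply_swap_simp(1) id_apply)
  then consider "codim_fix ?g = 1" | "codim_fix ?g = 2" | "2 < codim_fix ?g"
    using codim_fix_pos by fastforce
  then show ?thesis
  proof cases
    case 1
    with assms(2) obtain phi psi where
      w: "w = wedge phi psi" and "phi \<in> dual_fix ?g" and psi: "psi \<in> dual_fix_perp ?g"
      by (auto simp: wedge_gens_def)
    then have "\<forall>i. phi (?g \<langle>$\<rangle> i) = phi i"
      using dual_fix_apply by blast
    moreover obtain p where "psi = (\<lambda>x. p * unit_diff a b x)"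
      using perp[OF psi] .
    then have "\<forall>i. psi (?g \<langle>$\<rangle> i) = - psi i"
      by (simp add: unit_diff_swap)
    ultimately show ?thesis
      unfolding w by (rule anti_invariant_wedge)
  next
    case 2
    with assms(2) obtain phi psi where
      w: "w = wedge phi psi" and phi: "phi \<in> dual_fix_perp ?g" and psi: "psi \<in> dual_fix_perp ?g"
      by (auto simp: wedge_gens_def)
    obtain p q where "phi = (\<lambda>x. p * unit_diff a b x)" "psi = (\<lambda>x. q * unit_diff a b x)"
      using perp[OF phi] perp[OF psi] by metis
    then have "w j l = 0" for j l
      unfolding w wedge_def by simp
    then show ?thesis by (simp add: anti_invariant_form_def)
  next
    case 3
    with assms(2) show ?thesis by (simp add: wedge_gens_def)
  qed
qed

lemma anti_invariant_wedge_gens_double_transposition: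
  assumes abcd: "distinct [a, b, c, d]" and "w \<in> wedge_gens (\<langle>a \<leftrightarrow> b\<rangle> * \<langle>c \<leftrightarrow> d\<rangle>)"
  shows "anti_invariant_form \<langle>a \<leftrightarrow> b\<rangle> w"
proof (cases "codim_fix (\<langle>a \<leftrightarrow> b\<rangle> * \<langle>c \<leftrightarrow> d\<rangle>) = 2")
  case True
  note perp = dual_fix_perp_double_transposition[OF abcd]
  from True assms(2) obtain phi psi where w: "w = wedge phi psi"
    and phi: "phi \<in> dual_fix_perp (\<langle>a \<leftrightarrow> b\<rangle> * \<langle>c \<leftrightarrow> d\<rangle>)"
    and psi: "psi \<in> dual_fix_perp (\<langle>a \<leftrightarrow> b\<rangle> * \<langle>c \<leftrightarrow> d\<rangle>)"
    by (auto simp: wedge_gens_def)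
  obtain p q where "phi = (\<lambda>x. p * unit_diff a b x + q * unit_diff c d x)"
    using perp[OF phi] .
  moreover obtain p' q' where "psi = (\<lambda>x. p' * unit_diff a b x + q' * unit_diff c d x)"
    using perp[OF psi] .
  moreover have "{a, b} \<inter> {c, d} = {}"
    using abcd by auto
  ultimately show ?thesis
    unfolding w anti_invariant_form_def wedge_def
    by (simp add: unit_diff_swap unit_diff_swap_disjoint algebra_simps)
next
  case False
  with two_le_codim_fix_double_transposition[OF abcd] assms(2) show ?thesis
    by (simp add: wedge_gens_def)
qed

lemma component_eq_0_if_anti_invariant:
  fixes a1 :: "'n::finite perm \<Rightarrow> 'n tens1" and a0 :: "'n perm \<Rightarrow> 'n form2"
  assumes "\<forall>x. a1 x \<in> H21 x" and "\<forall>x. a0 x \<in> H20 x"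
    and "\<forall>h. act1 h a1 = a1" and "\<forall>h. act0 h a0 = a0"
    and "k * g = g * k" and "fixsp g \<subseteq> fixsp k" and "\<forall>w\<in>wedge_gens g. anti_invariant_form k w"
  shows "a1 g = (\<lambda>i j l. 0) \<and> a0 g = (\<lambda>j l. 0)"
proof -
  have conj: "k * g * inverse k = g"
    using assms(5) by (simp add: mult.assoc)
  have "a0 g j l = a0 g (k \<langle>$\<rangle> j) (k \<langle>$\<rangle> l)" for j l
    using fun_cong[OF assms(4)[rule_format, of "inverse k"], of g] by (simp add: act0_def conj fun_eq_iff)
  moreover have "anti_invariant_form k (a0 g)"
    using anti_invariant_H20[OF assms(7)] assms(2) by blast
  moreover have "a1 g i j l = a1 g (k \<langle>$\<rangle> i) (k \<langle>$\<rangle> j) (k \<langle>$\<rangle> l)" for i j l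
    using fun_cong[OF assms(3)[rule_format, of "inverse k"], of g] by (simp add: act1_def conj fun_eq_iff)
  moreover have "anti_invariant_tens k (a1 g)"
    using anti_invariant_H21[OF assms(6,7)] assms(1) by blast
  ultimately show ?thesis
    by (simp add: anti_invariant_form_def anti_invariant_tens_def fun_eq_iff)
qed

theorem lemma4p3:
  fixes a1 :: "'n::finite perm \<Rightarrow> 'n tens1"
    and a0 :: "'n perm \<Rightarrow> 'n form2"
    and g :: "'n perm"
  assumes "CARD('n) \<ge> 3"
    and "\<forall>x. a1 x \<in> H21 x"
    and "\<forall>x. a0 x \<in> H20 x"
    and "\<forall>h. act1 h a1 = a1"
    and "\<forall>h. act0 h a0 = a0"
    and "g \<noteq> 1"
    and "\<not> is_3cycle g"
  shows "a1 g = (\<lambda>i j k. 0) \<and> a0 g = (\<lambda>j k. 0)"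
proof -
  note component_eq_0 = component_eq_0_if_anti_invariant[OF assms(2-5)]
  from assms(6,7) show ?thesis
  proof (cases rule: transposition_or_double_transposition_or_three_le_codim_fix)
    case (1 a b)
    then show ?thesis
      using component_eq_0[where k = g] anti_invariant_wedge_gens_transposition by blast
  next
    case (2 a b c d)
    have "\<langle>c \<leftrightarrow> d\<rangle> * \<langle>a \<leftrightarrow> b\<rangle> = \<langle>a \<leftrightarrow> b\<rangle> * \<langle>c \<leftrightarrow> d\<rangle>"
      by (rule perm_mult_commute) (use 2(1) in \<open>auto simp: affected_swap\<close>)
    then have "\<langle>a \<leftrightarrow> b\<rangle> * g = g * \<langle>a \<leftrightarrow> b\<rangle>"
      by (simp only: 2(2) mult.assoc)
    moreover have "g \<langle>$\<rangle> a = b"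
      using 2 by (simp add: apply_times)
    ultimately show ?thesis
      using anti_invariant_wedge_gens_double_transposition[OF 2(1)]
      by (intro component_eq_0[where k = "\<langle>a \<leftrightarrow> b\<rangle>"] fixsp_subset_fixsp_swap) (simp_all add: 2(2))
  next
    case 3
    then have "wedge_gens g = {}"
      by (simp add: wedge_gens_def)
    then show ?thesis
      using component_eq_0[where k = 1] by (simp add: subset_iff mem_fixsp_iff)
  qed
qed

end
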